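(* Let $\Gamma=(G,\sigma)$ be a signed graph on $n$ vertices. Let $L_1,\dots,L_n$ be its cut-off adjacency eigenvalues with respect to an edge weight $w$ and vertex measure $\mu$, and $L'_1,\dots,L'_n$ those with respect to another edge weight $w'$ and vertex measure $\mu'$. Then $\#\{k:L_k=0\}=\#\{k:L'_k=0\}$.
   Context: $G=(V,E)$ is a finite undirected graph without self-loops, $V=\{1,\dots,n\}$. A signed graph $\Gamma=(G,\sigma)$ has signature $\sigma:E\to\{\pm1\}$, edge weight $w:E\to(0,\infty)$, vertex measure $\mu:V\to(0,\infty)$, potential $\kappa:V\to\mathbb R$. For $p\ge1$ and nonzero $f$, $\mathcal R_p^\sigma(f)=\frac{\sum_{\{i,j\}\in E}w_{ij}|f(i)-\sigma_{ij}f(j)|^p+\sum_i\kappa_i|f(i)|^p}{\sum_i\mu_i|f(i)|^p}$; $\mathcal S_p=\{f:\sum_i\mu_i|f(i)|^p=1\}$; Krasnoselskii genus $\gamma(B)$ of closed symmetric $B\subset\mathbb R^n\setminus\{0\}$: least $k$ with an odd continuous map $B\to\mathbb R^k\setminus\{0\}$; $\mathcal F_k(\mathcal S_p)$ = closed symmetric $B\subset\mathcal S_p$ with $\gamma(B)\ge k$; $\lambda_k^{(p)}=\min_{B\in\mathcal F_k(\mathcal S_p)}\max_{f\in B}\mathcal R_p^\sigma(f)$. Cut-off adjacency eigenvalues: $L_k:=\lim_{p\to\infty}2^{-p}\lambda_k^{(p)}$ (limits exist, independent of $\kappa$). *)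

theory Defs
  imports "HOL-Analysis.Analysis" "HOL-Library.Extended_Nat"
begin

text \<open>Vertices are the elements of a finite type 'v (so n = CARD('v)); functions
f : V \<rightarrow> R are vectors real^'v.  The target R^k of the genus is modelled as the
subspace of (nat \<Rightarrow> real) (product topology) of functions vanishing outside {..<k}.\<close>

definition Rk :: "nat \<Rightarrow> (nat \<Rightarrow> real) set" where
  "Rk k = {y. \<forall>i\<ge>k. y i = 0}"

definition has_odd_map_to :: "(real^'v) set \<Rightarrow> nat \<Rightarrow> bool" where
  "has_odd_map_to B k \<longleftrightarrow> (\<exists>g :: real^'v \<Rightarrow> (nat \<Rightarrow> real).
      continuous_on B g \<and> g ` B \<subseteq> Rk k - {\<lambda>_. 0} \<and> (\<forall>x\<in>B. g (- x) = (\<lambda>i. - g x i)))"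

definition genus :: "(real^'v) set \<Rightarrow> enat" where
  "genus B = (if \<exists>k. has_odd_map_to B k then enat (LEAST k. has_odd_map_to B k) else \<infinity>)"

text \<open>Signed graph: E is a symmetric irreflexive edge relation (each undirected edge
{i,j} appears as (i,j) and (j,i)); w, sigma are symmetric on E.\<close>
definition signed_graph ::
  "('v \<times> 'v) set \<Rightarrow> ('v \<Rightarrow> 'v \<Rightarrow> real) \<Rightarrow> bool" where
  "signed_graph E \<sigma> \<longleftrightarrow> sym E \<and> (\<forall>i. (i, i) \<notin> E) \<and>
     (\<forall>(i,j)\<in>E. \<sigma> i j = \<sigma> j i \<and> (\<sigma> i j = 1 \<or> \<sigma> i j = -1))"

definition admissible_weight :: "('v \<times> 'v) set \<Rightarrow> ('v \<Rightarrow> 'v \<Rightarrow> real) \<Rightarrow> bool" where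
  "admissible_weight E w \<longleftrightarrow> (\<forall>(i,j)\<in>E. w i j = w j i \<and> w i j > 0)"

definition measure_pos :: "('v \<Rightarrow> real) \<Rightarrow> bool" where
  "measure_pos \<mu> \<longleftrightarrow> (\<forall>i. \<mu> i > 0)"

text \<open>p-Rayleigh quotient; the sum over undirected edges is half the sum over E.\<close>
definition rayleigh ::
  "('v::finite \<times> 'v) set \<Rightarrow> ('v \<Rightarrow> 'v \<Rightarrow> real) \<Rightarrow> ('v \<Rightarrow> 'v \<Rightarrow> real) \<Rightarrow> ('v \<Rightarrow> real)
   \<Rightarrow> ('v \<Rightarrow> real) \<Rightarrow> real \<Rightarrow> real^'v \<Rightarrow> real" where
  "rayleigh E \<sigma> w \<mu> \<kappa> p f =
     ((1/2) * (\<Sum>(i,j)\<in>E. w i j * \<bar>f $ i - \<sigma> i j * f $ j\<bar> powr p)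
       + (\<Sum>i\<in>UNIV. \<kappa> i * \<bar>f $ i\<bar> powr p))
     / (\<Sum>i\<in>UNIV. \<mu> i * \<bar>f $ i\<bar> powr p)"

definition sphere_p :: "('v::finite \<Rightarrow> real) \<Rightarrow> real \<Rightarrow> (real^'v) set" where
  "sphere_p \<mu> p = {f. (\<Sum>i\<in>UNIV. \<mu> i * \<bar>f $ i\<bar> powr p) = 1}"

definition genus_family :: "('v::finite \<Rightarrow> real) \<Rightarrow> real \<Rightarrow> nat \<Rightarrow> (real^'v) set set" where
  "genus_family \<mu> p k = {B. B \<subseteq> sphere_p \<mu> p \<and> closed B \<and> (\<forall>x\<in>B. - x \<in> B)
                             \<and> genus B \<ge> enat k}"

text \<open>Variational eigenvalue lambda_k^(p) (min-max; min/max attained, written Inf/Sup).\<close>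
definition var_eigenvalue ::
  "('v::finite \<times> 'v) set \<Rightarrow> ('v \<Rightarrow> 'v \<Rightarrow> real) \<Rightarrow> ('v \<Rightarrow> 'v \<Rightarrow> real) \<Rightarrow> ('v \<Rightarrow> real)
   \<Rightarrow> ('v \<Rightarrow> real) \<Rightarrow> real \<Rightarrow> nat \<Rightarrow> real" where
  "var_eigenvalue E \<sigma> w \<mu> \<kappa> p k =
     Inf ((\<lambda>B. Sup (rayleigh E \<sigma> w \<mu> \<kappa> p ` B)) ` genus_family \<mu> p k)"

definition cutoff_eigenvalue ::
  "('v::finite \<times> 'v) set \<Rightarrow> ('v \<Rightarrow> 'v \<Rightarrow> real) \<Rightarrow> ('v \<Rightarrow> 'v \<Rightarrow> real) \<Rightarrow> ('v \<Rightarrow> real)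
   \<Rightarrow> ('v \<Rightarrow> real) \<Rightarrow> nat \<Rightarrow> real" where
  "cutoff_eigenvalue E \<sigma> w \<mu> \<kappa> k =
     Lim at_top (\<lambda>p::real. 2 powr (- p) * var_eigenvalue E \<sigma> w \<mu> \<kappa> p k)"

end

theory Submission
  imports Defs "HOL-Real_Asymp.Real_Asymp"
begin

text \<open>
  Put \<open>\<kappa> = 0\<close> first. The coordinatewise signed power \<open>f \<mapsto> sgn f \<bar>f\<bar>^(p/q)\<close>, \<open>p \<le> q\<close>, maps
  the \<open>p\<close>-sphere oddly and continuously onto the \<open>q\<close>-sphere, hence carries genus families to
  genus families, and since \<open>\<bar>sgn a \<bar>a\<bar>^s - sgn b \<bar>b\<bar>^s\<bar> \<le> 2^(1-s) \<bar>a - b\<bar>^s\<close> for \<open>s \<le> 1\<close> it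
  raises the edge energy by at most \<open>2^(q-p)\<close>. So \<open>2^(-p) \<lambda>\<^sub>k(p)\<close> is nonincreasing in \<open>p\<close>
  and converges; a potential shifts \<open>\<lambda>\<^sub>k(p)\<close> by a bounded amount, which does not change the
  limit. Normalising \<open>f\<close> with respect to another measure \<open>\<mu>'\<close> transports genus families in the
  same way and shows \<open>\<lambda>\<^sub>k(p; w', \<mu>') \<le> C \<lambda>\<^sub>k(p; w, \<mu>)\<close> with \<open>C\<close> independent of \<open>p\<close>. By symmetry
  the two limits are comparable, so they vanish together.
\<close>

section \<open>Krasnoselskii genus\<close>

lemma genus_le_genus_image:
  fixes h :: "real^'a \<Rightarrow> real^'b"
  assumes cont: "continuous_on B h" and odd: "\<And>x. x \<in> B \<Longrightarrow> h (- x) = - h x"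
  shows "genus B \<le> genus (h ` B)"
proof -
  have "has_odd_map_to B m" if "has_odd_map_to (h ` B) m" for m
  proof -
    from that obtain g :: "real^'b \<Rightarrow> nat \<Rightarrow> real" where
      "continuous_on (h ` B) g" "g ` h ` B \<subseteq> Rk m - {\<lambda>_. 0}"
      "\<forall>y\<in>h ` B. g (- y) = (\<lambda>i. - g y i)"
      unfolding has_odd_map_to_def by blast
    then show ?thesis
      unfolding has_odd_map_to_def using cont odd
      by (intro exI[of _ "g \<circ> h"]) (auto intro: continuous_on_compose2)
  qed
  then show ?thesis
    unfolding genus_def by (auto intro: Least_le LeastI2_ex)
qed

lemma genus_empty: "genus ({} :: (real^'a) set) = 0"
proof -
  have "has_odd_map_to ({} :: (real^'a) set) 0"
    unfolding has_odd_map_to_def by auto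
  then show ?thesis
    unfolding genus_def zero_enat_def by auto
qed

lemma genus_family_member:
  assumes "B \<in> genus_family \<mu> p k" "1 \<le> k"
  shows "B \<noteq> {} \<and> B \<subseteq> sphere_p \<mu> p"
  using assms unfolding genus_family_def by (auto simp: genus_empty enat_0_iff)

section \<open>Energies on the p-sphere\<close>

definition p_mass :: "('v::finite \<Rightarrow> real) \<Rightarrow> real \<Rightarrow> real^'v \<Rightarrow> real" where
  "p_mass \<mu> p f = (\<Sum>i\<in>UNIV. \<mu> i * \<bar>f $ i\<bar> powr p)"

definition edge_energy ::
  "('v::finite \<times> 'v) set \<Rightarrow> ('v \<Rightarrow> 'v \<Rightarrow> real) \<Rightarrow> ('v \<Rightarrow> 'v \<Rightarrow> real) \<Rightarrow> real \<Rightarrow> real^'v \<Rightarrow> real"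
  where "edge_energy E \<sigma> w p f = (1/2) * (\<Sum>(i,j)\<in>E. w i j * \<bar>f $ i - \<sigma> i j * f $ j\<bar> powr p)"

definition potential_energy :: "('v::finite \<Rightarrow> real) \<Rightarrow> real \<Rightarrow> real^'v \<Rightarrow> real" where
  "potential_energy \<kappa> p f = (\<Sum>i\<in>UNIV. \<kappa> i * \<bar>f $ i\<bar> powr p)"

lemma sphere_p_eq: "sphere_p \<mu> p = {f. p_mass \<mu> p f = 1}"
  unfolding sphere_p_def p_mass_def ..

lemma rayleigh_eq:
  "rayleigh E \<sigma> w \<mu> \<kappa> p f = (edge_energy E \<sigma> w p f + potential_energy \<kappa> p f) / p_mass \<mu> p f"
  unfolding rayleigh_def edge_energy_def potential_energy_def p_mass_def ..

lemma rayleigh_on_sphere_p: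
  "f \<in> sphere_p \<mu> p \<Longrightarrow> rayleigh E \<sigma> w \<mu> \<kappa> p f = edge_energy E \<sigma> w p f + potential_energy \<kappa> p f"
  by (simp add: rayleigh_eq sphere_p_eq)

lemma potential_energy_zero [simp]: "potential_energy (\<lambda>_. 0) p f = 0"
  unfolding potential_energy_def by simp

lemma p_mass_scaleR: "p_mass \<mu> p (c *\<^sub>R f) = \<bar>c\<bar> powr p * p_mass \<mu> p f"
  unfolding p_mass_def by (simp add: abs_mult powr_mult sum_distrib_left mult_ac)

lemma edge_energy_scaleR: "edge_energy E \<sigma> w p (c *\<^sub>R f) = \<bar>c\<bar> powr p * edge_energy E \<sigma> w p f"
proof -
  have scale: "\<bar>(c *\<^sub>R f) $ i - s * (c *\<^sub>R f) $ j\<bar> powr p = \<bar>c\<bar> powr p * \<bar>f $ i - s * f $ j\<bar> powr p"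
    for i j s
  proof -
    have "(c *\<^sub>R f) $ i - s * (c *\<^sub>R f) $ j = c * (f $ i - s * f $ j)"
      by (simp add: algebra_simps)
    then show ?thesis by (simp add: abs_mult powr_mult)
  qed
  show ?thesis
    unfolding edge_energy_def case_prod_unfold scale sum_distrib_left by (simp add: mult_ac)
qed

lemma p_mass_pos:
  assumes "measure_pos \<mu>" "f \<noteq> 0"
  shows "0 < p_mass \<mu> p f"
proof -
  obtain i where "f $ i \<noteq> 0" using assms(2) by (auto simp: vec_eq_iff)
  then have "0 < \<mu> i * \<bar>f $ i\<bar> powr p" using assms(1) by (simp add: measure_pos_def)
  also have "\<dots> \<le> p_mass \<mu> p f"
    unfolding p_mass_def using assms(1)
    by (intro member_le_sum) (auto simp: measure_pos_def less_imp_le)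
  finally show ?thesis .
qed

lemma zero_notin_sphere_p: "0 \<notin> sphere_p \<mu> p"
  by (simp add: sphere_p_def)

lemma edge_energy_nonneg: "admissible_weight E w \<Longrightarrow> 0 \<le> edge_energy E \<sigma> w p f"
  unfolding edge_energy_def admissible_weight_def
  by (auto intro!: sum_nonneg simp: case_prod_unfold less_imp_le)

lemma sphere_p_coordinate_le:
  assumes "measure_pos \<mu>" "f \<in> sphere_p \<mu> p"
  shows "\<mu> i * \<bar>f $ i\<bar> powr p \<le> 1"
proof -
  have "\<mu> i * \<bar>f $ i\<bar> powr p \<le> p_mass \<mu> p f"
    unfolding p_mass_def using assms(1)
    by (intro member_le_sum) (auto simp: measure_pos_def less_imp_le)
  then show ?thesis using assms(2) by (simp add: sphere_p_eq)
qed

lemma abs_potential_energy_le: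
  assumes "measure_pos \<mu>" "f \<in> sphere_p \<mu> p"
  shows "\<bar>potential_energy \<kappa> p f\<bar> \<le> (\<Sum>i\<in>UNIV. \<bar>\<kappa> i\<bar> / \<mu> i)"
  unfolding potential_energy_def
proof (rule order_trans[OF sum_abs sum_mono])
  fix i
  have "\<bar>f $ i\<bar> powr p \<le> 1 / \<mu> i"
    using sphere_p_coordinate_le[OF assms] assms(1)
    by (simp add: measure_pos_def pos_le_divide_eq mult.commute)
  then have "\<bar>\<kappa> i\<bar> * \<bar>f $ i\<bar> powr p \<le> \<bar>\<kappa> i\<bar> * (1 / \<mu> i)"
    by (rule mult_left_mono) simp
  then show "\<bar>\<kappa> i * \<bar>f $ i\<bar> powr p\<bar> \<le> \<bar>\<kappa> i\<bar> / \<mu> i"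
    by (simp add: abs_mult)
qed

lemma continuous_on_p_mass: "0 < p \<Longrightarrow> continuous_on S (p_mass \<mu> p)"
  unfolding p_mass_def by (intro continuous_intros continuous_on_powr') auto

lemma continuous_on_edge_energy: "0 < p \<Longrightarrow> continuous_on S (edge_energy E \<sigma> w p)"
  unfolding edge_energy_def case_prod_unfold
  by (intro continuous_intros continuous_on_powr') auto

lemma continuous_on_potential_energy: "0 < p \<Longrightarrow> continuous_on S (potential_energy \<kappa> p)"
  unfolding potential_energy_def by (intro continuous_intros continuous_on_powr') auto

lemma compact_sphere_p:
  fixes \<mu> :: "'v::finite \<Rightarrow> real"
  assumes "measure_pos \<mu>" "0 < p"
  shows "compact (sphere_p \<mu> p)"
  unfolding compact_eq_bounded_closed
proof
  have "\<bar>f $ i\<bar> \<le> (1 / \<mu> i) powr (1 / p)" if "f \<in> sphere_p \<mu> p" for f i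
  proof -
    have "\<bar>f $ i\<bar> powr p \<le> 1 / \<mu> i"
      using sphere_p_coordinate_le[OF assms(1) that] assms(1)
      by (simp add: measure_pos_def pos_le_divide_eq mult.commute)
    then have "(\<bar>f $ i\<bar> powr p) powr (1 / p) \<le> (1 / \<mu> i) powr (1 / p)"
      using assms(2) by (intro powr_mono2) auto
    then show ?thesis using assms(2) by (simp add: powr_powr)
  qed
  then have "norm f \<le> (\<Sum>i\<in>UNIV. (1 / \<mu> i) powr (1 / p))" if "f \<in> sphere_p \<mu> p" for f
    using that by (intro order_trans[OF norm_le_l1_cart sum_mono]) auto
  then show "bounded (sphere_p \<mu> p)"
    unfolding bounded_iff by blast
  show "closed (sphere_p \<mu> p)"
    unfolding sphere_p_eq using continuous_on_p_mass[OF assms(2)]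
    by (intro closed_Collect_eq) auto
qed

lemma bounded_rayleigh_sphere_p:
  assumes "measure_pos \<mu>" "0 < p"
  shows "bounded (rayleigh E \<sigma> w \<mu> \<kappa> p ` sphere_p \<mu> p)"
proof -
  have "rayleigh E \<sigma> w \<mu> \<kappa> p ` sphere_p \<mu> p
      = (\<lambda>f. edge_energy E \<sigma> w p f + potential_energy \<kappa> p f) ` sphere_p \<mu> p"
    by (auto simp: rayleigh_on_sphere_p)
  moreover have "compact \<dots>"
    using assms by (intro compact_continuous_image compact_sphere_p continuous_intros
        continuous_on_edge_energy continuous_on_potential_energy)
  ultimately show ?thesis by (simp add: compact_imp_bounded)
qed

section \<open>Min-max values over genus families\<close>

definition minimax :: "('a \<Rightarrow> real) \<Rightarrow> 'a set set \<Rightarrow> real" where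
  "minimax F \<A> = Inf ((\<lambda>A. Sup (F ` A)) ` \<A>)"

lemma var_eigenvalue_eq_minimax:
  "var_eigenvalue E \<sigma> w \<mu> \<kappa> p k = minimax (rayleigh E \<sigma> w \<mu> \<kappa> p) (genus_family \<mu> p k)"
  unfolding var_eigenvalue_def minimax_def ..

lemma bdd_above_image_subset:
  fixes F :: "'a \<Rightarrow> real"
  shows "bounded (F ` S) \<Longrightarrow> A \<subseteq> S \<Longrightarrow> bdd_above (F ` A)"
  by (rule bdd_above_mono[OF bounded_imp_bdd_above]) auto

lemma minimax_nonneg:
  fixes F :: "'a \<Rightarrow> real"
  assumes "\<A> \<noteq> {}" "\<And>A. A \<in> \<A> \<Longrightarrow> A \<noteq> {} \<and> A \<subseteq> S" "bounded (F ` S)"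
    "\<And>x. x \<in> S \<Longrightarrow> 0 \<le> F x"
  shows "0 \<le> minimax F \<A>"
  unfolding minimax_def
proof (rule cInf_greatest)
  show "(\<lambda>A. Sup (F ` A)) ` \<A> \<noteq> {}" using assms(1) by simp
  fix y assume "y \<in> (\<lambda>A. Sup (F ` A)) ` \<A>"
  then obtain A x where A: "A \<in> \<A>" "x \<in> A" "y = Sup (F ` A)" using assms(2) by blast
  have "F x \<le> Sup (F ` A)"
    using A assms(2,3) by (intro cSup_upper bdd_above_image_subset) auto
  with A assms(2,4) show "0 \<le> y" by force
qed

lemma minimax_le_affine:
  fixes F G :: "'a \<Rightarrow> real"
  assumes "\<A> \<noteq> {}" "\<And>A. A \<in> \<A> \<Longrightarrow> A \<noteq> {} \<and> A \<subseteq> S" "\<And>B. B \<in> \<B> \<Longrightarrow> B \<noteq> {} \<and> B \<subseteq> T"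
    "bounded (F ` S)" "bounded (G ` T)" "\<And>A. A \<in> \<A> \<Longrightarrow> h ` A \<in> \<B>"
    "\<And>x. x \<in> S \<Longrightarrow> G (h x) \<le> c * F x + d" "0 < c"
  shows "minimax G \<B> \<le> c * minimax F \<A> + d"
proof -
  obtain b where b: "\<And>x. x \<in> T \<Longrightarrow> b \<le> G x"
    using bounded_imp_bdd_below[OF assms(5)] by (auto simp: bdd_below_def)
  have "b \<le> Sup (G ` B)" if B: "B \<in> \<B>" for B
  proof -
    obtain x where "x \<in> B" using assms(3) B by blast
    then have "G x \<le> Sup (G ` B)"
      using assms(3,5) B by (intro cSup_upper bdd_above_image_subset) auto
    with b \<open>x \<in> B\<close> assms(3) B show ?thesis by force
  qed
  then have bdd: "bdd_below ((\<lambda>B. Sup (G ` B)) ` \<B>)"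
    by (intro bdd_belowI) auto
  have "minimax G \<B> - d \<le> c * Sup (F ` A)" if A: "A \<in> \<A>" for A
  proof -
    have "minimax G \<B> \<le> Sup (G ` h ` A)"
      unfolding minimax_def using bdd assms(6)[OF A] by (intro cInf_lower) auto
    also have "\<dots> \<le> c * Sup (F ` A) + d"
    proof (rule cSup_least)
      show "G ` h ` A \<noteq> {}" using assms(2) A by blast
    next
      fix y assume "y \<in> G ` h ` A"
      then obtain x where x: "x \<in> A" "y = G (h x)" by blast
      have "c * F x \<le> c * Sup (F ` A)"
        using assms(2,4,8) A x(1) by (intro mult_left_mono cSup_upper bdd_above_image_subset) auto
      then show "y \<le> c * Sup (F ` A) + d"
        using assms(2,7) A x by fastforce
    qed
    finally show ?thesis by simp
  qed
  then have "(minimax G \<B> - d) / c \<le> minimax F \<A>"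
    unfolding minimax_def using assms(1,8)
    by (intro cInf_greatest) (auto simp: pos_divide_le_eq mult.commute)
  then show ?thesis using assms(8) by (simp add: pos_divide_le_eq mult.commute)
qed

lemma genus_family_image:
  fixes h :: "real^'v::finite \<Rightarrow> real^'v"
  assumes "measure_pos \<mu>" "0 < p" "continuous_on (sphere_p \<mu> p) h"
    "\<And>x. x \<in> sphere_p \<mu> p \<Longrightarrow> h (- x) = - h x" "h ` sphere_p \<mu> p \<subseteq> sphere_p \<mu>' q"
    "B \<in> genus_family \<mu> p k"
  shows "h ` B \<in> genus_family \<mu>' q k"
proof -
  have B: "B \<subseteq> sphere_p \<mu> p" "closed B" "\<And>x. x \<in> B \<Longrightarrow> - x \<in> B" "enat k \<le> genus B"
    using assms(6) unfolding genus_family_def by auto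
  have cont: "continuous_on B h" using continuous_on_subset[OF assms(3) B(1)] .
  have "compact B"
    using compact_Int_closed[OF compact_sphere_p[OF assms(1,2)] B(2)] B(1) by (simp add: Int_absorb1)
  then have "closed (h ` B)"
    using cont by (intro compact_imp_closed compact_continuous_image)
  moreover have "- y \<in> h ` B" if "y \<in> h ` B" for y
    using that B(1,3) assms(4) by force
  moreover have "genus B \<le> genus (h ` B)"
    using cont B(1) assms(4) by (intro genus_le_genus_image) auto
  ultimately show ?thesis
    using B(1,4) assms(5) unfolding genus_family_def by (auto intro: order_trans)
qed

section \<open>The signed power and normalisation maps\<close>

lemma powr_add_le_add_powr:
  fixes x y s :: real
  assumes "0 < s" "s \<le> 1" "0 \<le> x" "0 \<le> y"
  shows "(x + y) powr s \<le> x powr s + y powr s"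
proof (cases "x + y = 0")
  case False
  then have xy: "0 < x + y" using assms by simp
  have part: "z * (x + y) powr (s - 1) \<le> z powr s" if "0 \<le> z" "z \<le> x + y" for z
  proof (cases "z = 0")
    case False
    then have "(x + y) powr (s - 1) \<le> z powr (s - 1)"
      using assms that by (intro powr_mono2') auto
    then have "z * (x + y) powr (s - 1) \<le> z * z powr (s - 1)"
      using that by (intro mult_left_mono)
    then show ?thesis
      using that False by (simp add: powr_mult_base)
  qed simp
  have "(x + y) * (x + y) powr (s - 1) \<le> x powr s + y powr s"
    using add_mono[OF part[of x] part[of y]] assms by (simp add: distrib_right)
  then show ?thesis using xy by (simp add: powr_diff)
qed (use assms in simp)

lemma abs_powr_diff_le:
  fixes x y s :: real
  assumes "0 < s" "s \<le> 1" "0 \<le> x" "0 \<le> y"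
  shows "\<bar>x powr s - y powr s\<bar> \<le> \<bar>x - y\<bar> powr s"
proof -
  have *: "b powr s - a powr s \<le> (b - a) powr s" if "0 \<le> a" "a \<le> b" for a b
    using powr_add_le_add_powr[OF assms(1,2), of "b - a" a] that by simp
  show ?thesis
    using *[of x y] *[of y x] assms powr_mono2[of s x y] powr_mono2[of s y x]
    by (cases "y \<le> x") (auto simp: abs_minus_commute)
qed

lemma add_powr_le_powr_add:
  fixes x y s :: real
  assumes "0 < s" "s \<le> 1" "0 \<le> x" "0 \<le> y"
  shows "x powr s + y powr s \<le> 2 powr (1 - s) * (x + y) powr s"
proof (cases "x = 0 \<or> y = 0")
  case True
  have "1 \<le> 2 powr (1 - s)" using assms by (intro ge_one_powr_ge_zero) auto
  with True show ?thesis by (auto simp: mult_le_cancel_right1)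
next
  case False
  define c where "c = (x + y) / 2"
  have pos: "0 < x" "0 < y" "0 < c" using False assms by (auto simp: c_def)
  text \<open>Young's inequality at both points, around the midpoint \<open>c\<close>.\<close>
  have "(x powr s + y powr s) * c powr (1 - s) \<le> (s * x + (1 - s) * c) + (s * y + (1 - s) * c)"
    using add_mono[OF Youngs_inequality_0[of s "1 - s" x c] Youngs_inequality_0[of s "1 - s" y c]]
      assms pos by (simp add: distrib_right)
  also have "\<dots> = c powr (1 - s) * (2 * c powr s)"
    using pos by (simp add: c_def powr_add[symmetric] algebra_simps)
  finally have "x powr s + y powr s \<le> 2 * c powr s"
    using pos by (simp add: mult.commute)
  also have "\<dots> = 2 powr (1 - s) * (x + y) powr s"
    using pos by (simp add: c_def powr_divide powr_diff)
  finally show ?thesis .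
qed

definition signed_powr :: "real \<Rightarrow> real \<Rightarrow> real" where
  "signed_powr s x = sgn x * \<bar>x\<bar> powr s"

lemma signed_powr_nonneg: "0 \<le> x \<Longrightarrow> signed_powr s x = x powr s"
  unfolding signed_powr_def by (cases "x = 0") auto

lemma signed_powr_nonpos: "x \<le> 0 \<Longrightarrow> signed_powr s x = - ((- x) powr s)"
  unfolding signed_powr_def by (cases "x = 0") auto

lemma signed_powr_minus: "signed_powr s (- x) = - signed_powr s x"
  unfolding signed_powr_def by simp

lemma abs_signed_powr: "\<bar>signed_powr s x\<bar> = \<bar>x\<bar> powr s"
  unfolding signed_powr_def by (cases "x = 0") (auto simp: abs_mult)

lemma continuous_on_signed_powr: "0 < s \<Longrightarrow> continuous_on S (signed_powr s)"
proof -
  assume "0 < s"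
  then have "continuous_on UNIV (\<lambda>x. if x \<le> 0 then - ((- x) powr s) else x powr s)"
    by (intro continuous_on_cases_le continuous_intros continuous_on_powr') auto
  moreover have "signed_powr s = (\<lambda>x. if x \<le> 0 then - ((- x) powr s) else x powr s)"
    by (auto simp: signed_powr_nonneg signed_powr_nonpos)
  ultimately show ?thesis by (metis continuous_on_subset subset_UNIV)
qed

lemma abs_signed_powr_diff_le:
  assumes "0 < s" "s \<le> 1"
  shows "\<bar>signed_powr s a - signed_powr s b\<bar> \<le> 2 powr (1 - s) * \<bar>a - b\<bar> powr s"
proof -
  have same_sign: "\<bar>x powr s - y powr s\<bar> \<le> 2 powr (1 - s) * \<bar>x - y\<bar> powr s"
    if "0 \<le> x" "0 \<le> y" for x y
  proof -
    have "1 \<le> 2 powr (1 - s)" using assms by (intro ge_one_powr_ge_zero) auto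
    then show ?thesis
      using abs_powr_diff_le[OF assms that] by (simp add: order_trans[OF _ mult_le_cancel_right1[THEN iffD2]])
  qed
  have opposite_sign: "\<bar>signed_powr s x - signed_powr s y\<bar> \<le> 2 powr (1 - s) * \<bar>x - y\<bar> powr s"
    if "0 \<le> x" "y \<le> 0" for x y
    using add_powr_le_powr_add[OF assms, of x "- y"] that
    by (simp add: signed_powr_nonneg signed_powr_nonpos)
  consider "0 \<le> a" "0 \<le> b" | "a \<le> 0" "b \<le> 0" | "0 \<le> a" "b \<le> 0" | "a \<le> 0" "0 \<le> b"
    by linarith
  then show ?thesis
  proof cases
    case 1 then show ?thesis using same_sign[of a b] by (simp add: signed_powr_nonneg)
  next
    case 2 then show ?thesis
      using same_sign[of "- a" "- b"] by (simp add: signed_powr_nonpos abs_minus_commute)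
  next
    case 3 then show ?thesis using opposite_sign by simp
  next
    case 4 then show ?thesis using opposite_sign[of b a] by (simp add: abs_minus_commute)
  qed
qed

definition signed_powr_vec :: "real \<Rightarrow> real^'v \<Rightarrow> real^'v" where
  "signed_powr_vec s f = (\<chi> i. signed_powr s (f $ i))"

lemma signed_powr_vec_minus: "signed_powr_vec s (- f) = - signed_powr_vec s f"
  unfolding signed_powr_vec_def by (simp add: vec_eq_iff signed_powr_minus)

lemma continuous_on_signed_powr_vec: "0 < s \<Longrightarrow> continuous_on S (signed_powr_vec s)"
  unfolding signed_powr_vec_def
  by (intro continuous_on_vec_lambda continuous_on_compose2[OF continuous_on_signed_powr])
    (auto intro: continuous_on_component continuous_on_id)

lemma p_mass_signed_powr_vec:
  "q \<noteq> 0 \<Longrightarrow> p_mass \<mu> q (signed_powr_vec (p / q) f) = p_mass \<mu> p f"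
  unfolding p_mass_def signed_powr_vec_def by (simp add: abs_signed_powr powr_powr)

lemma edge_energy_signed_powr_vec_le:
  assumes "signed_graph E \<sigma>" "admissible_weight E w" "0 < p" "p \<le> q"
  shows "edge_energy E \<sigma> w q (signed_powr_vec (p / q) f) \<le> 2 powr (q - p) * edge_energy E \<sigma> w p f"
proof -
  define s where "s = p / q"
  have s: "0 < s" "s \<le> 1" "(1 - s) * q = q - p" "s * q = p"
    using assms(3,4) by (auto simp: s_def field_simps)
  have "w i j * \<bar>signed_powr_vec s f $ i - \<sigma> i j * signed_powr_vec s f $ j\<bar> powr q
      \<le> 2 powr (q - p) * (w i j * \<bar>f $ i - \<sigma> i j * f $ j\<bar> powr p)" if "(i, j) \<in> E" for i j
  proof -
    have "\<sigma> i j = 1 \<or> \<sigma> i j = -1" using assms(1) that by (auto simp: signed_graph_def)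
    then have "\<sigma> i j * signed_powr s (f $ j) = signed_powr s (\<sigma> i j * f $ j)"
      by (auto simp: signed_powr_minus)
    then have "\<bar>signed_powr_vec s f $ i - \<sigma> i j * signed_powr_vec s f $ j\<bar>
        \<le> 2 powr (1 - s) * \<bar>f $ i - \<sigma> i j * f $ j\<bar> powr s"
      unfolding signed_powr_vec_def using abs_signed_powr_diff_le[OF s(1,2)] by simp
    then have "\<bar>signed_powr_vec s f $ i - \<sigma> i j * signed_powr_vec s f $ j\<bar> powr q
        \<le> (2 powr (1 - s) * \<bar>f $ i - \<sigma> i j * f $ j\<bar> powr s) powr q"
      using assms(3,4) by (intro powr_mono2) auto
    also have "\<dots> = 2 powr (q - p) * \<bar>f $ i - \<sigma> i j * f $ j\<bar> powr p"
      by (simp add: powr_mult powr_powr s(3,4))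
    finally show ?thesis
      using assms(2) that by (auto simp: admissible_weight_def mult.left_commute intro: mult_left_mono)
  qed
  then have "(\<Sum>(i,j)\<in>E. w i j * \<bar>signed_powr_vec s f $ i - \<sigma> i j * signed_powr_vec s f $ j\<bar> powr q)
      \<le> 2 powr (q - p) * (\<Sum>(i,j)\<in>E. w i j * \<bar>f $ i - \<sigma> i j * f $ j\<bar> powr p)"
    unfolding sum_distrib_left by (intro sum_mono) auto
  then show ?thesis unfolding edge_energy_def s_def by simp
qed

definition p_normalize :: "('v::finite \<Rightarrow> real) \<Rightarrow> real \<Rightarrow> real^'v \<Rightarrow> real^'v" where
  "p_normalize \<mu> p f = p_mass \<mu> p f powr (- 1 / p) *\<^sub>R f"

lemma p_normalize_minus: "p_normalize \<mu> p (- f) = - p_normalize \<mu> p f"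
  unfolding p_normalize_def p_mass_def by simp

lemma continuous_on_p_normalize:
  assumes "measure_pos \<mu>" "0 < p" "0 \<notin> S"
  shows "continuous_on S (p_normalize \<mu> p)"
proof -
  have "0 < p_mass \<mu> p f" if "f \<in> S" for f
    using assms(3) that by (intro p_mass_pos[OF assms(1)]) auto
  then show ?thesis
    unfolding p_normalize_def using assms(2)
    by (intro continuous_intros continuous_on_powr' continuous_on_p_mass) force+
qed

lemma abs_p_normalize_factor_powr:
  assumes "measure_pos \<mu>" "0 < p" "f \<noteq> 0"
  shows "\<bar>p_mass \<mu> p f powr (- 1 / p)\<bar> powr p = 1 / p_mass \<mu> p f"
  unfolding abs_of_nonneg[OF powr_ge_zero] powr_powr
  using p_mass_pos[OF assms(1,3), of p] assms(2) by (simp add: powr_minus_divide)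

lemma p_normalize_in_sphere_p:
  assumes "measure_pos \<mu>" "0 < p" "f \<noteq> 0"
  shows "p_normalize \<mu> p f \<in> sphere_p \<mu> p"
  using abs_p_normalize_factor_powr[OF assms] p_mass_pos[OF assms(1,3), of p]
  by (simp add: sphere_p_eq p_normalize_def p_mass_scaleR)

lemma edge_energy_p_normalize:
  assumes "measure_pos \<mu>" "0 < p" "f \<noteq> 0"
  shows "edge_energy E \<sigma> w p (p_normalize \<mu> p f) = edge_energy E \<sigma> w p f / p_mass \<mu> p f"
  using abs_p_normalize_factor_powr[OF assms] by (simp add: p_normalize_def edge_energy_scaleR)

lemma signed_powr_vec_sphere_p:
  "q \<noteq> 0 \<Longrightarrow> f \<in> sphere_p \<mu> p \<Longrightarrow> signed_powr_vec (p / q) f \<in> sphere_p \<mu> q"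
  by (simp add: sphere_p_eq p_mass_signed_powr_vec)

lemma genus_family_image_signed_powr_vec:
  assumes "measure_pos \<mu>" "0 < p" "p \<le> q" "B \<in> genus_family \<mu> p k"
  shows "signed_powr_vec (p / q) ` B \<in> genus_family \<mu> q k"
  using assms signed_powr_vec_sphere_p[of q]
  by (intro genus_family_image continuous_on_signed_powr_vec) (auto simp: signed_powr_vec_minus)

lemma genus_family_image_p_normalize:
  fixes \<mu> \<mu>' :: "'v::finite \<Rightarrow> real"
  assumes "measure_pos \<mu>" "measure_pos \<mu>'" "0 < p" "B \<in> genus_family \<mu> p k"
  shows "p_normalize \<mu>' p ` B \<in> genus_family \<mu>' p k"
  using assms zero_notin_sphere_p[of \<mu> p]
  by (intro genus_family_image continuous_on_p_normalize)
    (auto simp: p_normalize_minus intro!: p_normalize_in_sphere_p)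

lemma genus_family_nonempty_exponent_mono:
  assumes "measure_pos \<mu>" "0 < p" "p \<le> q" "genus_family \<mu> p k \<noteq> {}"
  shows "genus_family \<mu> q k \<noteq> {}"
  using assms genus_family_image_signed_powr_vec by blast

lemma genus_family_nonempty_change_measure:
  fixes \<mu> \<mu>' :: "'v::finite \<Rightarrow> real"
  assumes "measure_pos \<mu>" "measure_pos \<mu>'" "0 < p" "genus_family \<mu> p k \<noteq> {}"
  shows "genus_family \<mu>' p k \<noteq> {}"
  using assms genus_family_image_p_normalize by blast

section \<open>Comparison of variational and cut-off eigenvalues\<close>

lemma var_eigenvalue_nonneg:
  assumes "admissible_weight E w" "measure_pos \<mu>" "0 < p" "1 \<le> k" "genus_family \<mu> p k \<noteq> {}"
  shows "0 \<le> var_eigenvalue E \<sigma> w \<mu> (\<lambda>_. 0) p k"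
proof -
  have nonneg: "0 \<le> rayleigh E \<sigma> w \<mu> (\<lambda>_. 0) p f" if "f \<in> sphere_p \<mu> p" for f
    using that assms(1) by (simp add: rayleigh_on_sphere_p edge_energy_nonneg)
  show ?thesis
    unfolding var_eigenvalue_eq_minimax
    by (rule minimax_nonneg[OF assms(5) genus_family_member[OF _ assms(4)]
          bounded_rayleigh_sphere_p[OF assms(2,3)] nonneg])
qed

lemma abs_var_eigenvalue_potential_le:
  assumes "measure_pos \<mu>" "0 < p" "1 \<le> k" "genus_family \<mu> p k \<noteq> {}"
  shows "\<bar>var_eigenvalue E \<sigma> w \<mu> \<kappa> p k - var_eigenvalue E \<sigma> w \<mu> (\<lambda>_. 0) p k\<bar>
    \<le> (\<Sum>i\<in>UNIV. \<bar>\<kappa> i\<bar> / \<mu> i)"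
proof -
  define K where "K = (\<Sum>i\<in>UNIV. \<bar>\<kappa> i\<bar> / \<mu> i)"
  have shift: "\<bar>rayleigh E \<sigma> w \<mu> \<kappa> p f - rayleigh E \<sigma> w \<mu> (\<lambda>_. 0) p f\<bar> \<le> K"
    if "f \<in> sphere_p \<mu> p" for f
    using abs_potential_energy_le[OF assms(1) that] that by (simp add: rayleigh_on_sphere_p K_def)
  have transfer: "minimax (rayleigh E \<sigma> w \<mu> \<kappa>' p) (genus_family \<mu> p k)
      \<le> 1 * minimax (rayleigh E \<sigma> w \<mu> \<kappa>'' p) (genus_family \<mu> p k) + K"
    if "\<And>f. f \<in> sphere_p \<mu> p \<Longrightarrow> rayleigh E \<sigma> w \<mu> \<kappa>' p f \<le> rayleigh E \<sigma> w \<mu> \<kappa>'' p f + K"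
    for \<kappa>' \<kappa>''
    by (rule minimax_le_affine[OF assms(4) genus_family_member[OF _ assms(3)]
          genus_family_member[OF _ assms(3)] bounded_rayleigh_sphere_p[OF assms(1,2)]
          bounded_rayleigh_sphere_p[OF assms(1,2)], where h = "\<lambda>f. f"])
      (auto intro: that)
  have "minimax (rayleigh E \<sigma> w \<mu> \<kappa> p) (genus_family \<mu> p k)
      \<le> 1 * minimax (rayleigh E \<sigma> w \<mu> (\<lambda>_. 0) p) (genus_family \<mu> p k) + K"
    "minimax (rayleigh E \<sigma> w \<mu> (\<lambda>_. 0) p) (genus_family \<mu> p k)
      \<le> 1 * minimax (rayleigh E \<sigma> w \<mu> \<kappa> p) (genus_family \<mu> p k) + K"
    using shift by (intro transfer; force simp: abs_le_iff)+
  then show ?thesis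
    unfolding var_eigenvalue_eq_minimax K_def by simp
qed

lemma var_eigenvalue_exponent_le:
  assumes "signed_graph E \<sigma>" "admissible_weight E w" "measure_pos \<mu>" "0 < p" "p \<le> q" "1 \<le> k"
    "genus_family \<mu> p k \<noteq> {}"
  shows "var_eigenvalue E \<sigma> w \<mu> (\<lambda>_. 0) q k \<le> 2 powr (q - p) * var_eigenvalue E \<sigma> w \<mu> (\<lambda>_. 0) p k"
proof -
  have "minimax (rayleigh E \<sigma> w \<mu> (\<lambda>_. 0) q) (genus_family \<mu> q k)
      \<le> 2 powr (q - p) * minimax (rayleigh E \<sigma> w \<mu> (\<lambda>_. 0) p) (genus_family \<mu> p k) + 0"
  proof (rule minimax_le_affine[OF assms(7) genus_family_member[OF _ assms(6)]
        genus_family_member[OF _ assms(6)] bounded_rayleigh_sphere_p[OF assms(3,4)]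
        bounded_rayleigh_sphere_p[OF assms(3)]])
    show "rayleigh E \<sigma> w \<mu> (\<lambda>_. 0) q (signed_powr_vec (p / q) f)
        \<le> 2 powr (q - p) * rayleigh E \<sigma> w \<mu> (\<lambda>_. 0) p f + 0" if "f \<in> sphere_p \<mu> p" for f
      using edge_energy_signed_powr_vec_le[OF assms(1,2,4,5)] signed_powr_vec_sphere_p[OF _ that] that
        assms(4,5) by (simp add: rayleigh_on_sphere_p)
  qed (use assms(3-5) genus_family_image_signed_powr_vec in auto)
  then show ?thesis unfolding var_eigenvalue_eq_minimax by simp
qed

lemma finite_ratio_bound:
  fixes f g :: "'a \<Rightarrow> real"
  assumes "finite A" "\<And>x. x \<in> A \<Longrightarrow> 0 < g x"
  obtains C where "0 < C" "\<And>x. x \<in> A \<Longrightarrow> f x \<le> C * g x"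
proof
  define C where "C = 1 + (\<Sum>x\<in>A. \<bar>f x\<bar> / g x)"
  have ratio_le: "\<bar>f x\<bar> / g x \<le> C" if "x \<in> A" for x
    using assms that member_le_sum[of x A "\<lambda>x. \<bar>f x\<bar> / g x"]
    by (fastforce simp: C_def less_imp_le)
  show "0 < C"
    using assms by (auto simp: C_def less_imp_le intro!: add_pos_nonneg sum_nonneg)
  show "f x \<le> C * g x" if "x \<in> A" for x
    using ratio_le[OF that] assms(2)[OF that] by (simp add: divide_le_eq)
qed

lemma edge_energy_le_scaled:
  assumes "\<And>i j. (i, j) \<in> E \<Longrightarrow> w' i j \<le> C * w i j"
  shows "edge_energy E \<sigma> w' p f \<le> C * edge_energy E \<sigma> w p f"
  unfolding edge_energy_def sum_distrib_left case_prod_unfold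
  using assms by (auto intro!: sum_mono mult_right_mono simp: mult.assoc[symmetric])

lemma p_mass_le_scaled:
  assumes "\<And>i. \<mu> i \<le> C * \<mu>' i"
  shows "p_mass \<mu> p f \<le> C * p_mass \<mu>' p f"
  unfolding p_mass_def sum_distrib_left
  using assms by (auto intro!: sum_mono mult_right_mono simp: mult.assoc[symmetric])

lemma antimono_nonneg_convergent:
  fixes h :: "'a::linorder \<Rightarrow> real"
  assumes "\<And>x y. a \<le> x \<Longrightarrow> x \<le> y \<Longrightarrow> h y \<le> h x" "\<And>x. a \<le> x \<Longrightarrow> 0 \<le> h x"
  obtains L where "0 \<le> L" "(h \<longlongrightarrow> L) at_top"
proof
  define L where "L = Inf (h ` {a..})"
  have bdd: "bdd_below (h ` {a..})" using assms(2) by (intro bdd_belowI[of _ 0]) auto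
  show "0 \<le> L" unfolding L_def using assms(2) by (intro cInf_greatest) auto
  show "(h \<longlongrightarrow> L) at_top"
  proof (rule decreasing_tendsto)
    show "\<forall>\<^sub>F x in at_top. L \<le> h x"
      unfolding L_def using bdd by (intro eventually_at_top_linorderI[of a] cInf_lower) auto
  next
    fix y assume "L < y"
    then obtain x0 where "a \<le> x0" "h x0 < y"
      using cInf_lessD[of "h ` {a..}" y] unfolding L_def by auto
    then show "\<forall>\<^sub>F x in at_top. h x < y"
      using assms(1) by (intro eventually_at_top_linorderI[of x0]) (auto intro: le_less_trans)
  qed
qed

lemma comparable_limits_eq_0_iff:
  fixes f g :: "'a \<Rightarrow> real"
  assumes "F \<noteq> bot" "(f \<longlongrightarrow> a) F" "0 \<le> a" "(g \<longlongrightarrow> b) F" "0 \<le> b"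
    "\<forall>\<^sub>F x in F. g x \<le> c * f x \<and> f x \<le> d * g x"
  shows "a = 0 \<longleftrightarrow> b = 0"
proof -
  have "b \<le> c * a"
    by (rule tendsto_le[OF assms(1) tendsto_mult_left[OF assms(2)] assms(4) eventually_mono[OF assms(6)]])
      simp
  moreover have "a \<le> d * b"
    by (rule tendsto_le[OF assms(1) tendsto_mult_left[OF assms(4)] assms(2) eventually_mono[OF assms(6)]])
      simp
  ultimately show ?thesis using assms(3,5) by auto
qed

lemma var_eigenvalue_change_weights_le:
  assumes "admissible_weight E w" "admissible_weight E w'" "measure_pos \<mu>" "measure_pos \<mu>'"
    "1 \<le> k"
  obtains C where "\<And>p. 0 < p \<Longrightarrow> genus_family \<mu> p k \<noteq> {} \<Longrightarrow>
    var_eigenvalue E \<sigma> w' \<mu>' (\<lambda>_. 0) p k \<le> C * var_eigenvalue E \<sigma> w \<mu> (\<lambda>_. 0) p k"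
proof -
  obtain Cw where Cw: "0 < Cw" "\<And>i j. (i, j) \<in> E \<Longrightarrow> w' i j \<le> Cw * w i j"
    by (rule finite_ratio_bound[of E "\<lambda>(i, j). w i j" "\<lambda>(i, j). w' i j"])
      (use assms(1) in \<open>auto simp: admissible_weight_def\<close>)
  obtain Cm where Cm: "0 < Cm" "\<And>i. \<mu> i \<le> Cm * \<mu>' i"
    by (rule finite_ratio_bound[of UNIV \<mu>' \<mu>]) (use assms(4) in \<open>auto simp: measure_pos_def\<close>)
  have rayleigh_le: "rayleigh E \<sigma> w' \<mu>' (\<lambda>_. 0) p (p_normalize \<mu>' p f)
      \<le> (Cw * Cm) * rayleigh E \<sigma> w \<mu> (\<lambda>_. 0) p f + 0" if "0 < p" "f \<in> sphere_p \<mu> p" for p f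
  proof -
    have f: "f \<noteq> 0" using that(2) zero_notin_sphere_p by blast
    have "p_mass \<mu> p f \<le> Cm * p_mass \<mu>' p f"
      by (rule p_mass_le_scaled) (rule Cm(2))
    then have mass: "0 < p_mass \<mu>' p f" "1 \<le> Cm * p_mass \<mu>' p f"
      using p_mass_pos[OF assms(4) f] that(2) by (auto simp: sphere_p_eq)
    have "rayleigh E \<sigma> w' \<mu>' (\<lambda>_. 0) p (p_normalize \<mu>' p f) = edge_energy E \<sigma> w' p f / p_mass \<mu>' p f"
      using p_normalize_in_sphere_p[OF assms(4) that(1) f] edge_energy_p_normalize[OF assms(4) that(1) f]
      by (simp add: rayleigh_on_sphere_p)
    also have "\<dots> \<le> edge_energy E \<sigma> w' p f * Cm"
    proof -
      have "edge_energy E \<sigma> w' p f * 1 \<le> edge_energy E \<sigma> w' p f * (Cm * p_mass \<mu>' p f)"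
        using mass(2) edge_energy_nonneg[OF assms(2)] by (rule mult_left_mono)
      then show ?thesis using mass(1) by (simp add: divide_le_eq mult_ac)
    qed
    also have "\<dots> \<le> Cw * edge_energy E \<sigma> w p f * Cm"
      using edge_energy_le_scaled[of E w' Cw w, OF Cw(2)] Cm(1) by (intro mult_right_mono) auto
    finally show ?thesis using that(2) by (simp add: rayleigh_on_sphere_p mult_ac)
  qed
  have "var_eigenvalue E \<sigma> w' \<mu>' (\<lambda>_. 0) p k \<le> (Cw * Cm) * var_eigenvalue E \<sigma> w \<mu> (\<lambda>_. 0) p k + 0"
    if "0 < p" "genus_family \<mu> p k \<noteq> {}" for p
    unfolding var_eigenvalue_eq_minimax
    by (rule minimax_le_affine[OF that(2) genus_family_member[OF _ assms(5)]
        genus_family_member[OF _ assms(5)] bounded_rayleigh_sphere_p[OF assms(3) that(1)]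
        bounded_rayleigh_sphere_p[OF assms(4) that(1)]
        genus_family_image_p_normalize[OF assms(3,4) that(1)] rayleigh_le[OF that(1)]])
      (use Cw(1) Cm(1) in auto)
  then show thesis using that[of "Cw * Cm"] by simp
qed

lemma tendsto_two_powr_neg_at_top: "((\<lambda>p::real. 2 powr (- p)) \<longlongrightarrow> 0) at_top"
  by real_asymp

lemma cutoff_eigenvalue_limit:
  assumes "signed_graph E \<sigma>" "admissible_weight E w" "measure_pos \<mu>" "0 < p0" "1 \<le> k"
    "genus_family \<mu> p0 k \<noteq> {}"
  shows "((\<lambda>p. 2 powr (- p) * var_eigenvalue E \<sigma> w \<mu> (\<lambda>_. 0) p k)
      \<longlongrightarrow> cutoff_eigenvalue E \<sigma> w \<mu> \<kappa> k) at_top"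
    and "0 \<le> cutoff_eigenvalue E \<sigma> w \<mu> \<kappa> k"
proof -
  define h where "h p = 2 powr (- p) * var_eigenvalue E \<sigma> w \<mu> (\<lambda>_. 0) p k" for p
  define g where "g p = 2 powr (- p) * var_eigenvalue E \<sigma> w \<mu> \<kappa> p k" for p
  have ne: "genus_family \<mu> p k \<noteq> {}" if "p0 \<le> p" for p
    using genus_family_nonempty_exponent_mono[OF assms(3,4) that assms(6)] .
  have "h q \<le> h p" if "p0 \<le> p" "p \<le> q" for p q
  proof -
    have "h q \<le> 2 powr (- q) * (2 powr (q - p) * var_eigenvalue E \<sigma> w \<mu> (\<lambda>_. 0) p k)"
      unfolding h_def using that assms(4)
      by (intro mult_left_mono var_eigenvalue_exponent_le[OF assms(1-3) _ _ assms(5) ne]) auto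
    then show ?thesis by (simp add: h_def powr_diff powr_minus divide_simps)
  qed
  moreover have "0 \<le> h p" if "p0 \<le> p" for p
    unfolding h_def using that assms(4) var_eigenvalue_nonneg[OF assms(2,3) _ assms(5) ne] by simp
  ultimately obtain L where L: "0 \<le> L" "(h \<longlongrightarrow> L) at_top"
    by (rule antimono_nonneg_convergent)
  have "((\<lambda>p. g p - h p) \<longlongrightarrow> 0) at_top"
  proof (rule Lim_null_comparison)
    show "\<forall>\<^sub>F p in at_top. norm (g p - h p) \<le> 2 powr (- p) * (\<Sum>i\<in>UNIV. \<bar>\<kappa> i\<bar> / \<mu> i)"
      using eventually_ge_at_top[of p0]
    proof eventually_elim
      case (elim p)
      then show ?case
        unfolding g_def h_def right_diff_distrib[symmetric] norm_mult using assms(4)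
        by (auto intro!: mult_left_mono abs_var_eigenvalue_potential_le[OF assms(3) _ assms(5) ne])
    qed
    show "((\<lambda>p. 2 powr (- p) * (\<Sum>i\<in>UNIV. \<bar>\<kappa> i\<bar> / \<mu> i)) \<longlongrightarrow> 0) at_top"
      using tendsto_mult_left_zero[OF tendsto_two_powr_neg_at_top] by simp
  qed
  from tendsto_add[OF L(2) this] have "(g \<longlongrightarrow> L) at_top" by simp
  then have "cutoff_eigenvalue E \<sigma> w \<mu> \<kappa> k = L"
    unfolding cutoff_eigenvalue_def g_def by (intro tendsto_Lim) auto
  with L show "(h \<longlongrightarrow> cutoff_eigenvalue E \<sigma> w \<mu> \<kappa> k) at_top" "0 \<le> cutoff_eigenvalue E \<sigma> w \<mu> \<kappa> k"
    by auto
qed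

text \<open>Without admissible sets, \<open>var_eigenvalue\<close> is the junk value \<open>Inf {}\<close>, which still
  disappears in the limit.\<close>

lemma cutoff_eigenvalue_no_genus_family:
  assumes "\<And>p. 0 < p \<Longrightarrow> genus_family \<mu> p k = {}"
  shows "cutoff_eigenvalue E \<sigma> w \<mu> \<kappa> k = 0"
proof -
  have "\<forall>\<^sub>F p in at_top. 2 powr (- p) * Inf {} = 2 powr (- p) * var_eigenvalue E \<sigma> w \<mu> \<kappa> p k"
    using eventually_gt_at_top[of 0] by eventually_elim (simp add: assms var_eigenvalue_def)
  moreover have "((\<lambda>p. 2 powr (- p) * Inf {}) \<longlongrightarrow> (0 :: real)) at_top"
    using tendsto_mult_left_zero[OF tendsto_two_powr_neg_at_top] by simp
  ultimately have "((\<lambda>p. 2 powr (- p) * var_eigenvalue E \<sigma> w \<mu> \<kappa> p k) \<longlongrightarrow> 0) at_top"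
    by (rule Lim_transform_eventually[rotated])
  then show ?thesis
    unfolding cutoff_eigenvalue_def by (intro tendsto_Lim) auto
qed

lemma eventually_scaled_var_eigenvalue_change_weights_le:
  assumes "admissible_weight E w" "admissible_weight E w'" "measure_pos \<mu>" "measure_pos \<mu>'"
    "1 \<le> k" "0 < p0" "genus_family \<mu> p0 k \<noteq> {}"
  obtains C where "\<forall>\<^sub>F p in at_top. 2 powr (- p) * var_eigenvalue E \<sigma> w' \<mu>' (\<lambda>_. 0) p k
    \<le> C * (2 powr (- p) * var_eigenvalue E \<sigma> w \<mu> (\<lambda>_. 0) p k)"
proof -
  obtain C where C: "\<And>p. 0 < p \<Longrightarrow> genus_family \<mu> p k \<noteq> {} \<Longrightarrow>
      var_eigenvalue E \<sigma> w' \<mu>' (\<lambda>_. 0) p k \<le> C * var_eigenvalue E \<sigma> w \<mu> (\<lambda>_. 0) p k"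
    using var_eigenvalue_change_weights_le[OF assms(1-5), where \<sigma> = \<sigma>] by blast
  have "\<forall>\<^sub>F p in at_top. 2 powr (- p) * var_eigenvalue E \<sigma> w' \<mu>' (\<lambda>_. 0) p k
      \<le> C * (2 powr (- p) * var_eigenvalue E \<sigma> w \<mu> (\<lambda>_. 0) p k)"
    using eventually_ge_at_top[of p0]
  proof eventually_elim
    case (elim p)
    with assms(6) have "0 < p" by simp
    with C genus_family_nonempty_exponent_mono[OF assms(3,6) elim assms(7)] show ?case
      by (simp add: mult.left_commute[of C])
  qed
  then show thesis by (rule that)
qed

lemma cutoff_eigenvalue_eq_0_iff:
  assumes "signed_graph E \<sigma>" "admissible_weight E w" "admissible_weight E w'"
    "measure_pos \<mu>" "measure_pos \<mu>'" "1 \<le> k"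
  shows "cutoff_eigenvalue E \<sigma> w \<mu> \<kappa> k = 0 \<longleftrightarrow> cutoff_eigenvalue E \<sigma> w' \<mu>' \<kappa>' k = 0"
proof (cases "\<exists>p0>0. genus_family \<mu> p0 k \<noteq> {}")
  case True
  then obtain p0 where p0: "0 < p0" "genus_family \<mu> p0 k \<noteq> {}" by blast
  have p0': "genus_family \<mu>' p0 k \<noteq> {}"
    by (rule genus_family_nonempty_change_measure[OF assms(4,5) p0])
  obtain C where C: "\<forall>\<^sub>F p in at_top. 2 powr (- p) * var_eigenvalue E \<sigma> w' \<mu>' (\<lambda>_. 0) p k
      \<le> C * (2 powr (- p) * var_eigenvalue E \<sigma> w \<mu> (\<lambda>_. 0) p k)"
    by (rule eventually_scaled_var_eigenvalue_change_weights_le[OF assms(2-6) p0])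
  obtain C' where C': "\<forall>\<^sub>F p in at_top. 2 powr (- p) * var_eigenvalue E \<sigma> w \<mu> (\<lambda>_. 0) p k
      \<le> C' * (2 powr (- p) * var_eigenvalue E \<sigma> w' \<mu>' (\<lambda>_. 0) p k)"
    by (rule eventually_scaled_var_eigenvalue_change_weights_le[OF assms(3,2,5,4,6) p0(1) p0'])
  from comparable_limits_eq_0_iff[OF _ cutoff_eigenvalue_limit[OF assms(1,2,4) p0(1) assms(6) p0(2)]
      cutoff_eigenvalue_limit[OF assms(1,3,5) p0(1) assms(6) p0'] eventually_conj[OF C C']]
  show ?thesis by simp
next
  case False
  then have "genus_family \<mu> p k = {}" "genus_family \<mu>' p k = {}" if "0 < p" for p
    using genus_family_nonempty_change_measure[OF assms(5,4) that, where k = k] that by auto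
  then show ?thesis by (simp add: cutoff_eigenvalue_no_genus_family)
qed

theorem proposition6p4:
  fixes E :: "('v::finite \<times> 'v) set"
    and \<sigma> w w' :: "'v \<Rightarrow> 'v \<Rightarrow> real"
    and \<mu> \<mu>' \<kappa> \<kappa>' :: "'v \<Rightarrow> real"
  assumes "signed_graph E \<sigma>"
    and "admissible_weight E w" and "admissible_weight E w'"
    and "measure_pos \<mu>" and "measure_pos \<mu>'"
  shows "card {k \<in> {1..CARD('v)}. cutoff_eigenvalue E \<sigma> w \<mu> \<kappa> k = 0}
       = card {k \<in> {1..CARD('v)}. cutoff_eigenvalue E \<sigma> w' \<mu>' \<kappa>' k = 0}"
  using cutoff_eigenvalue_eq_0_iff[OF assms] by (intro arg_cong[where f = card] Collect_cong) auto

end
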